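(* Let $M$ be a metric space and $X$ a non-zero Banach space. Let $(x_n)_{n\in\mathbb N}\subseteq M$ and $r_n>0$ be such that the open balls $B(x_n,r_n)$, $n\in\mathbb N$, are pairwise disjoint. Then for every Lipschitz map $F:M\to X$ and every $\varepsilon>0$ there exists a Lipschitz map $G:M\to X$ such that the Lipschitz constant of $F-G$ is less than $\varepsilon$ and $G(x_n)\neq G(x_m)$ for all $n\neq m$. *)

theory Defs
  imports "HOL-Analysis.Analysis"
begin

definition lipschitz_map :: "('a::metric_space \<Rightarrow> 'b::metric_space) \<Rightarrow> bool" where
  "lipschitz_map f \<longleftrightarrow> (\<exists>C. lipschitz_on C UNIV f)"

end

theory Submission
  imports Defs
begin

text \<open>Fix \<open>v \<noteq> 0\<close>. On each ball put a tent \<open>t\<^sub>n (r\<^sub>n - d(p, x\<^sub>n))\<close> with weight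
  \<open>t\<^sub>n \<in> [0,1]\<close>; because the balls are disjoint, these tents glue to a 1-Lipschitz function \<open>\<phi>\<close>
  vanishing off the balls. Then \<open>G = F + c \<phi> v\<close> with \<open>c \<parallel>v\<parallel> = \<epsilon>/2\<close> differs from \<open>F\<close> by an
  \<open>\<epsilon>/2\<close>-Lipschitz map, and \<open>G(x\<^sub>n) = F(x\<^sub>n) + c t\<^sub>n r\<^sub>n v\<close>. The weights are chosen one at a time:
  the line \<open>s \<mapsto> F(x\<^sub>n) + c s r\<^sub>n v\<close> meets the finitely many earlier values \<open>G(x\<^sub>m)\<close>, \<open>m < n\<close>,
  in finitely many points, so some \<open>s \<in> [0,1]\<close> avoids them all.\<close>

lemma nat_choice_with_history:
  assumes ex: "\<And>n (f::nat \<Rightarrow> 'c). \<exists>y. P n f y"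
    and prefix: "\<And>n f g y. (\<forall>m<n. f m = g m) \<Longrightarrow> P n f y \<Longrightarrow> P n g y"
  shows "\<exists>t. \<forall>n. P n t (t n)"
proof -
  define T where "T = rec_nat (\<lambda>_. undefined) (\<lambda>n f. f(n := SOME y. P n f y))"
  have T_Suc: "T (Suc n) = (T n)(n := SOME y. P n (T n) y)" for n
    by (simp add: T_def)
  define t where "t n = T (Suc n) n" for n
  have T_prefix: "\<forall>m<k. T k m = t m" for k
    by (induction k) (auto simp: T_Suc t_def less_Suc_eq)
  have "P n t (t n)" for n
  proof -
    have "P n (T n) (SOME y. P n (T n) y)" using ex by (rule someI_ex)
    then have "P n (T n) (t n)" by (simp add: t_def T_Suc)
    then show ?thesis using prefix T_prefix by blast
  qed
  then show ?thesis by blast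
qed

lemma exists_unit_interval_avoiding_finite:
  fixes u v :: "'b::real_normed_vector"
  assumes "v \<noteq> 0" "a > 0" "finite W"
  shows "\<exists>s\<in>{0..1}. u + (a * s) *\<^sub>R v \<notin> W"
proof (rule ccontr)
  assume "\<not> ?thesis"
  then have "{0..1} \<subseteq> (\<lambda>s. u + (a * s) *\<^sub>R v) -` W" by auto
  moreover have "inj (\<lambda>s. u + (a * s) *\<^sub>R v)"
    using assms(1,2) by (auto intro: injI)
  ultimately have "finite {0..1::real}"
    using finite_vimageI[OF \<open>finite W\<close>] finite_subset by blast
  then show False using infinite_Icc[of "0::real" 1] by simp
qed

lemma exists_unit_weights_separating:
  fixes y :: "nat \<Rightarrow> 'b::real_normed_vector"
  assumes "v \<noteq> 0" "\<And>n. a n > 0"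
  shows "\<exists>t. (\<forall>n. t n \<in> {0..1})
           \<and> (\<forall>n m. n \<noteq> m \<longrightarrow> y n + (a n * t n) *\<^sub>R v \<noteq> y m + (a m * t m) *\<^sub>R v)"
proof -
  define P where "P n f s \<longleftrightarrow> s \<in> {0..1} \<and>
      (\<forall>m<n. y n + (a n * s) *\<^sub>R v \<noteq> y m + (a m * f m) *\<^sub>R v)" for n f s
  have "\<exists>t. \<forall>n. P n t (t n)"
  proof (rule nat_choice_with_history)
    fix n and f :: "nat \<Rightarrow> real"
    have "finite ((\<lambda>m. y m + (a m * f m) *\<^sub>R v) ` {..<n})" by simp
    then obtain s where "s \<in> {0..1}"
      "y n + (a n * s) *\<^sub>R v \<notin> (\<lambda>m. y m + (a m * f m) *\<^sub>R v) ` {..<n}"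
      using exists_unit_interval_avoiding_finite assms by blast
    then show "\<exists>s. P n f s" unfolding P_def by auto
  qed (auto simp: P_def)
  then obtain t where t: "\<And>n. P n t (t n)" by blast
  have "y n + (a n * t n) *\<^sub>R v \<noteq> y m + (a m * t m) *\<^sub>R v" if "n \<noteq> m" for n m
    using that t[of n] t[of m] unfolding P_def by (metis linorder_neqE_nat)
  with t show ?thesis unfolding P_def by blast
qed

lemma lipschitz_on_scaleR_vector:
  fixes v :: "'b::real_normed_vector"
  assumes "C-lipschitz_on U f"
  shows "(C * norm v)-lipschitz_on U (\<lambda>p. f p *\<^sub>R v)"
proof (rule lipschitz_onI)
  fix p q assume "p \<in> U" "q \<in> U"
  have "dist (f p *\<^sub>R v) (f q *\<^sub>R v) = dist (f p) (f q) * norm v"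
    by (simp add: dist_norm dist_real_def scaleR_diff_left[symmetric])
  also have "\<dots> \<le> C * dist p q * norm v"
    using lipschitz_onD[OF assms \<open>p \<in> U\<close> \<open>q \<in> U\<close>] by (simp add: mult_right_mono)
  finally show "dist (f p *\<^sub>R v) (f q *\<^sub>R v) \<le> C * norm v * dist p q"
    by (simp add: algebra_simps)
qed (use lipschitz_on_nonneg[OF assms] in simp)

definition ball_bump :: "('i \<Rightarrow> 'a::metric_space) \<Rightarrow> ('i \<Rightarrow> real) \<Rightarrow> ('i \<Rightarrow> real) \<Rightarrow> 'a \<Rightarrow> real"
  where "ball_bump x r t p =
    (if \<exists>n. p \<in> ball (x n) (r n)
     then (let n = SOME n. p \<in> ball (x n) (r n) in t n * (r n - dist p (x n)))
     else 0)"

lemma ball_bump_in_ball: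
  assumes "disjoint_family (\<lambda>n. ball (x n) (r n))" "p \<in> ball (x n) (r n)"
  shows "ball_bump x r t p = t n * (r n - dist p (x n))"
proof -
  have "p \<in> ball (x (SOME n. p \<in> ball (x n) (r n))) (r (SOME n. p \<in> ball (x n) (r n)))"
    using assms(2) by (rule someI)
  then have "(SOME n. p \<in> ball (x n) (r n)) = n"
    using assms unfolding disjoint_family_on_def by blast
  with assms(2) show ?thesis by (auto simp: ball_bump_def Let_def)
qed

lemma ball_bump_nonneg:
  assumes "disjoint_family (\<lambda>n. ball (x n) (r n))" "\<And>n. t n \<ge> 0"
  shows "ball_bump x r t p \<ge> 0"
proof (cases "\<exists>n. p \<in> ball (x n) (r n)")
  case True
  then obtain n where "p \<in> ball (x n) (r n)" by blast
  then show ?thesis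
    using ball_bump_in_ball[OF assms(1)] assms(2)[of n] by (simp add: dist_commute)
qed (simp add: ball_bump_def)

lemma ball_bump_le_dist:
  assumes "disjoint_family (\<lambda>n. ball (x n) (r n))" "\<And>n. t n \<in> {0..1}"
    and "\<nexists>n. p \<in> ball (x n) (r n) \<and> q \<in> ball (x n) (r n)"
  shows "ball_bump x r t p \<le> dist p q"
proof (cases "\<exists>n. p \<in> ball (x n) (r n)")
  case True
  then obtain n where n: "p \<in> ball (x n) (r n)" by blast
  with assms(3) have "r n \<le> dist (x n) q" by auto
  have "ball_bump x r t p = t n * (r n - dist p (x n))"
    by (rule ball_bump_in_ball[OF assms(1) n])
  also have "\<dots> \<le> r n - dist p (x n)"
    using assms(2)[of n] n by (simp add: dist_commute mult_left_le_one_le)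
  also have "\<dots> \<le> dist p q"
    using \<open>r n \<le> dist (x n) q\<close> dist_triangle[of "x n" q p] by (simp add: dist_commute)
  finally show ?thesis .
qed (simp add: ball_bump_def)

lemma lipschitz_on_ball_bump:
  assumes disj: "disjoint_family (\<lambda>n. ball (x n) (r n))" and t: "\<And>n. t n \<in> {0..1}"
  shows "1-lipschitz_on UNIV (ball_bump x r t)"
proof (rule lipschitz_onI)
  fix p q
  show "dist (ball_bump x r t p) (ball_bump x r t q) \<le> 1 * dist p q"
  proof (cases "\<exists>n. p \<in> ball (x n) (r n) \<and> q \<in> ball (x n) (r n)")
    case True
    then obtain n where n: "p \<in> ball (x n) (r n)" "q \<in> ball (x n) (r n)" by blast
    have "dist (ball_bump x r t p) (ball_bump x r t q) = t n * \<bar>dist q (x n) - dist p (x n)\<bar>"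
      using ball_bump_in_ball[OF disj n(1)] ball_bump_in_ball[OF disj n(2)] t[of n]
      by (simp add: dist_real_def abs_mult right_diff_distrib[symmetric])
    also have "\<dots> \<le> \<bar>dist q (x n) - dist p (x n)\<bar>"
      using t[of n] by (simp add: mult_left_le_one_le)
    also have "\<dots> \<le> dist p q"
      using dist_triangle[of q "x n" p] dist_triangle[of p "x n" q]
      by (simp add: dist_commute abs_le_iff)
    finally show ?thesis by simp
  next
    case False
    then have "ball_bump x r t p \<le> dist p q" "ball_bump x r t q \<le> dist q p"
      by (auto intro!: ball_bump_le_dist[OF disj, where t = t, OF t])
    moreover have "ball_bump x r t p \<ge> 0" "ball_bump x r t q \<ge> 0"
      using ball_bump_nonneg[OF disj] t by auto
    ultimately show ?thesis by (simp add: dist_real_def dist_commute abs_le_iff)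
  qed
qed simp

theorem lemma2p6:
  fixes x :: "nat \<Rightarrow> 'a::metric_space"
    and r :: "nat \<Rightarrow> real"
    and F :: "'a \<Rightarrow> 'b::banach"
    and \<epsilon> :: real
  assumes nonzero: "\<exists>v::'b. v \<noteq> 0"
    and r_pos: "\<And>n. r n > 0"
    and disj: "\<And>n m. n \<noteq> m \<Longrightarrow> ball (x n) (r n) \<inter> ball (x m) (r m) = {}"
    and F_lip: "lipschitz_map F"
    and eps: "\<epsilon> > 0"
  shows "\<exists>G :: 'a \<Rightarrow> 'b. lipschitz_map G
           \<and> (\<exists>C < \<epsilon>. lipschitz_on C UNIV (\<lambda>p. F p - G p))
           \<and> (\<forall>n m. n \<noteq> m \<longrightarrow> G (x n) \<noteq> G (x m))"
proof -
  obtain v :: 'b where v: "v \<noteq> 0" using nonzero by blast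
  define c where "c = \<epsilon> / (2 * norm v)"
  have c_pos: "c > 0" using eps v by (simp add: c_def)
  obtain t where t: "\<And>n. t n \<in> {0..1}"
    and sep: "\<And>n m. n \<noteq> m \<Longrightarrow> F (x n) + (c * r n * t n) *\<^sub>R v \<noteq> F (x m) + (c * r m * t m) *\<^sub>R v"
    using exists_unit_weights_separating[OF v, of "\<lambda>n. c * r n" "\<lambda>n. F (x n)"] c_pos r_pos
    by auto
  have disj_family: "disjoint_family (\<lambda>n. ball (x n) (r n))"
    using disj by (simp add: disjoint_family_on_def)
  define h where "h p = (c * ball_bump x r t p) *\<^sub>R v" for p
  have "(c * 1)-lipschitz_on UNIV (\<lambda>p. c *\<^sub>R ball_bump x r t p)"
    using lipschitz_on_ball_bump[OF disj_family, where t = t, OF t] c_pos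
    by (intro lipschitz_on_cmult_nonneg) auto
  then have "(c * 1 * norm v)-lipschitz_on UNIV h"
    unfolding h_def by (auto dest: lipschitz_on_scaleR_vector)
  then have h_lip: "(\<epsilon>/2)-lipschitz_on UNIV h" using v by (simp add: c_def)
  define G where "G p = F p + h p" for p
  obtain CF where "CF-lipschitz_on UNIV F" using F_lip unfolding lipschitz_map_def by blast
  then have "lipschitz_map G"
    unfolding lipschitz_map_def G_def using lipschitz_on_add h_lip by blast
  moreover have "(\<epsilon>/2)-lipschitz_on UNIV (\<lambda>p. F p - G p)"
    using lipschitz_on_cmult[OF h_lip, of "-1"] by (simp add: G_def)
  moreover have "G (x n) = F (x n) + (c * r n * t n) *\<^sub>R v" for n
    using ball_bump_in_ball[OF disj_family, of "x n" n t] r_pos[of n]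
    by (simp add: G_def h_def algebra_simps)
  moreover have "\<epsilon>/2 < \<epsilon>" using eps by simp
  ultimately show ?thesis using sep by metis
qed

end
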